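(* The Jouanolou foliation $\mathcal{J}_2$ satisfies property $\mathcal{P}_S$: the vector field $J_2$ does not vanish on $\mathbf{C}^3\setminus\{0\}$, every singular point of $\mathcal{J}_2$ is hyperbolic, and every singular point of $\mathcal{J}_2$ is a source of the real field $W$.
   Context: $\mathcal{J}_2$ is the foliation of $\mathbf{P}^2_{\mathbf{C}}$ induced by the divergence-free homogeneous vector field $J_2=y^2\partial_x+z^2\partial_y+x^2\partial_z$ on $\mathbf{C}^3$. With $\Pi:\mathbf{C}^3\setminus\{0\}\to\mathbf{P}^2_{\mathbf{C}}$ and $p\cdot p'=x\bar x'+y\bar y'+z\bar z'$, the real field $W$ is the projection to $\mathbf{P}^2_{\mathbf{C}}$ of the real vector field $\mathrm{Re}(\tilde\rho J_2)$, $\tilde\rho(p)=-2(p\cdot J_2(p))/\|p\|^{4}$. A singular point is hyperbolic if the two eigenvalues of a local holomorphic vector field defining the foliation there are not $\mathbf{R}$-collinear; it is a source of $W$ if all eigenvalues of the linearization of $W$ there have positive real part. *)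

theory Defs
  imports "HOL-Analysis.Analysis" "Jordan_Normal_Form.Char_Poly"
begin

type_synonym c3 = "complex \<times> complex \<times> complex"

fun J2 :: "c3 \<Rightarrow> c3" where
  "J2 (x, y, z) = (y^2, z^2, x^2)"

fun herm :: "c3 \<Rightarrow> c3 \<Rightarrow> complex" where
  "herm (x, y, z) (x', y', z') = x * cnj x' + y * cnj y' + z * cnj z'"

fun sqnorm3 :: "c3 \<Rightarrow> real" where
  "sqnorm3 (x, y, z) = (cmod x)^2 + (cmod y)^2 + (cmod z)^2"

definition rho :: "c3 \<Rightarrow> complex" where
  "rho p = -2 * herm p (J2 p) / complex_of_real ((sqnorm3 p)^2)"

fun cscale :: "complex \<Rightarrow> c3 \<Rightarrow> c3" where
  "cscale c (x, y, z) = (c * x, c * y, c * z)"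

text \<open>The field rho~ J2 on C^3 minus 0 (its real part Re(rho~ J2) is the real field whose flow is
  p' = rho~(p) J2(p) with real time).\<close>
definition rhoJ2 :: "c3 \<Rightarrow> c3" where
  "rhoJ2 p = cscale (rho p) (J2 p)"

fun coord :: "nat \<Rightarrow> c3 \<Rightarrow> complex" where
  "coord k (x, y, z) = (if k = 0 then x else if k = 1 then y else z)"

fun others :: "nat \<Rightarrow> c3 \<Rightarrow> complex \<times> complex" where
  "others k (x, y, z) = (if k = 0 then (y, z) else if k = 1 then (x, z) else (x, y))"

text \<open>Standard affine charts of P^2: U_k = {p_k \<noteq> 0}; emb k is the inverse of the chart.\<close>
fun emb :: "nat \<Rightarrow> complex \<times> complex \<Rightarrow> c3" where
  "emb k (u, v) = (if k = 0 then (1, u, v) else if k = 1 then (u, 1, v) else (u, v, 1))"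

definition aff :: "nat \<Rightarrow> c3 \<Rightarrow> complex \<times> complex" where
  "aff k p = (fst (others k p) / coord k p, snd (others k p) / coord k p)"

text \<open>Expression in the affine chart k of (the projection to P^2 of) a vector field V on C^3:
  the derivative of the chart map p \<mapsto> others k p / p_k along V, at the point p = emb k q.\<close>
definition chart_field :: "nat \<Rightarrow> (c3 \<Rightarrow> c3) \<Rightarrow> complex \<times> complex \<Rightarrow> complex \<times> complex" where
  "chart_field k V q =
     (let p = emb k q; w = V p
      in (fst (others k w) - fst q * coord k w, snd (others k w) - snd q * coord k w))"

text \<open>Singular points of the foliation J_2 of P^2 (given by representatives p in C^3 minus 0):
  J2(p) is parallel to p.\<close>
definition sing_J2 :: "c3 \<Rightarrow> bool" where
  "sing_J2 p \<longleftrightarrow> p \<noteq> 0 \<and> (\<exists>c. J2 p = cscale c p)"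

definition cjac :: "(complex \<times> complex \<Rightarrow> complex \<times> complex) \<Rightarrow> complex \<times> complex \<Rightarrow> complex mat" where
  "cjac X q = mat 2 2 (\<lambda>(i, j).
     let comp = (if i = 0 then fst else snd);
         arg = (if j = 0 then (\<lambda>s. (s, snd q)) else (\<lambda>s. (fst q, s)));
         pt = (if j = 0 then fst q else snd q)
     in deriv (\<lambda>s. comp (X (arg s))) pt)"

definition R_collinear :: "complex \<Rightarrow> complex \<Rightarrow> bool" where
  "R_collinear a b \<longleftrightarrow> (\<exists>r s :: real. (r, s) \<noteq> (0, 0) \<and> of_real r * a + of_real s * b = 0)"

definition hyperbolic_sing :: "nat \<Rightarrow> complex \<times> complex \<Rightarrow> bool" where
  "hyperbolic_sing k q \<longleftrightarrow>
     (\<exists>l1 l2. char_poly (cjac (chart_field k J2) q) = [:-l1, 1:] * [:-l2, 1:]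
              \<and> \<not> R_collinear l1 l2)"

definition rbasis :: "nat \<Rightarrow> complex \<times> complex" where
  "rbasis j = (if j = 0 then (1, 0) else if j = 1 then (\<i>, 0) else if j = 2 then (0, 1) else (0, \<i>))"

definition rcoord :: "nat \<Rightarrow> complex \<times> complex \<Rightarrow> real" where
  "rcoord i w = (if i = 0 then Re (fst w) else if i = 1 then Im (fst w)
                 else if i = 2 then Re (snd w) else Im (snd w))"

text \<open>4x4 real matrix of an R-linear map of C^2, viewed as a complex matrix (for its eigenvalues).\<close>
definition rmat4 :: "(complex \<times> complex \<Rightarrow> complex \<times> complex) \<Rightarrow> complex mat" where
  "rmat4 D = mat 4 4 (\<lambda>(i, j). complex_of_real (rcoord i (D (rbasis j))))"

definition source_W :: "nat \<Rightarrow> complex \<times> complex \<Rightarrow> bool" where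
  "source_W k q \<longleftrightarrow>
     (\<exists>D. (chart_field k rhoJ2 has_derivative D) (at q) \<and>
          (\<forall>\<mu>. eigenvalue (rmat4 D) \<mu> \<longrightarrow> Re \<mu> > 0))"

end

theory Submission
  imports Defs
begin

text \<open>At a singular point \<open>p\<close> we have \<open>J2 p = c p\<close> with \<open>c \<noteq> 0\<close>. In the affine chart through
  \<open>p\<close> the foliation is defined by a polynomial field whose linear part \<open>A\<close> has trace \<open>-4c\<close> and
  determinant \<open>7c\<^sup>2\<close>, so its eigenvalues \<open>c(-2 \<plusminus> i \<surd>3)\<close> are not \<open>R\<close>-collinear. In the chart,
  \<open>W\<close> is \<open>rho~\<close> times that field; since the field vanishes at \<open>p\<close>, the linear part of \<open>W\<close> is
  \<open>rho~(p) A\<close>, and \<open>rho~(p) = -2 conj c / \<parallel>p\<parallel>\<^sup>2\<close>. Hence \<open>rho~(p) A\<close> has real positive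
  trace \<open>8|c|\<^sup>2/\<parallel>p\<parallel>\<^sup>2\<close> and real positive determinant \<open>28|c|\<^sup>4/\<parallel>p\<parallel>\<^sup>4\<close>; the eigenvalues of its
  realification are its eigenvalues and their conjugates, all with positive real part.\<close>

unbundle no vec_syntax

lemma det_carrier_mat_1: "(A :: 'a :: comm_ring_1 mat) \<in> carrier_mat 1 1 \<Longrightarrow> det A = A $$ (0, 0)"
  by (subst laplace_expansion_column[of A 1 0]) (auto simp: cofactor_def mat_delete_def)

lemma det_carrier_mat_2:
  "(A :: 'a :: comm_ring_1 mat) \<in> carrier_mat 2 2 \<Longrightarrow>
     det A = A $$ (0, 0) * A $$ (1, 1) - A $$ (0, 1) * A $$ (1, 0)"
  by (subst laplace_expansion_column[of A 2 0])
    (auto simp: cofactor_def numeral_2_eq_2 lessThan_Suc det_carrier_mat_1 mat_delete_def)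

lemma char_poly_mat_2:
  "char_poly (mat 2 2 f) = [:f (0, 0) * f (1, 1) - f (0, 1) * f (1, 0), -(f (0, 0) + f (1, 1)), 1:]"
  by (simp add: char_poly_defs det_carrier_mat_2)

lemma char_poly_cjac:
  assumes "(F has_derivative (\<lambda>h. (a * fst h + b * snd h, c * fst h + d * snd h))) (at q)"
  shows "char_poly (cjac F q) = [:a * d - b * c, -(a + d), 1:]"
proof -
  have F: "(F has_derivative (\<lambda>h. (a * fst h + b * snd h, c * fst h + d * snd h))) (at (fst q, snd q))"
    using assms by simp
  have "((\<lambda>s. (s, snd q)) has_derivative (\<lambda>h. (h, 0))) (at (fst q))"
    by (auto intro!: derivative_eq_intros)
  from has_derivative_compose[OF this F]
  have "((\<lambda>s. F (s, snd q)) has_derivative (\<lambda>h. (a * h, c * h))) (at (fst q))"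
    by simp
  from has_derivative_fst[OF this] has_derivative_snd[OF this]
  have "deriv (\<lambda>s. fst (F (s, snd q))) (fst q) = a" "deriv (\<lambda>s. snd (F (s, snd q))) (fst q) = c"
    by (auto intro!: DERIV_imp_deriv simp: has_field_derivative_def mult_commute_abs)
  moreover have "((\<lambda>s. (fst q, s)) has_derivative (\<lambda>h. (0, h))) (at (snd q))"
    by (auto intro!: derivative_eq_intros)
  from has_derivative_compose[OF this F]
  have "((\<lambda>s. F (fst q, s)) has_derivative (\<lambda>h. (b * h, d * h))) (at (snd q))"
    by simp
  from has_derivative_fst[OF this] has_derivative_snd[OF this]
  have "deriv (\<lambda>s. fst (F (fst q, s))) (snd q) = b" "deriv (\<lambda>s. snd (F (fst q, s))) (snd q) = d"
    by (auto intro!: DERIV_imp_deriv simp: has_field_derivative_def mult_commute_abs)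
  ultimately show ?thesis
    by (simp add: cjac_def char_poly_mat_2)
qed

lemma roots_not_R_collinear:
  assumes "w \<noteq> 0"
  shows "\<exists>l1 l2. [:7 * w^2, 4 * w, 1:] = [:-l1, 1:] * [:-l2, 1:] \<and> \<not> R_collinear l1 l2"
proof (intro exI conjI)
  define l1 where "l1 = w * (-2 + \<i> * sqrt 3)"
  define l2 where "l2 = w * (-2 - \<i> * sqrt 3)"
  have "(complex_of_real (sqrt 3))^2 = 3"
    by (metis of_real_numeral of_real_power real_sqrt_pow2 zero_le_numeral)
  then have "l1 * l2 = 7 * w^2"
    unfolding l1_def l2_def by (simp add: algebra_simps flip: power2_eq_square)
  moreover have "l1 + l2 = -4 * w"
    unfolding l1_def l2_def by (simp add: algebra_simps)
  moreover have "[:-l1, 1:] * [:-l2, 1:] = [:l1 * l2, -(l1 + l2), 1:]"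
    by (simp add: algebra_simps)
  ultimately show "[:7 * w^2, 4 * w, 1:] = [:-l1, 1:] * [:-l2, 1:]"
    by simp
  show "\<not> R_collinear l1 l2"
  proof
    assume "R_collinear l1 l2"
    then obtain r s :: real where rs: "(r, s) \<noteq> (0, 0)" "r * l1 + s * l2 = 0"
      unfolding R_collinear_def by blast
    then have "w * (of_real (-2 * (r + s)) + \<i> * of_real (sqrt 3 * (r - s))) = 0"
      unfolding l1_def l2_def by (simp add: algebra_simps)
    then have "of_real (-2 * (r + s)) + \<i> * of_real (sqrt 3 * (r - s)) = 0"
      using assms by simp
    then have "-2 * (r + s) = 0" "sqrt 3 * (r - s) = 0"
      by (simp_all add: complex_eq_iff)
    then show False
      using rs(1) by simp
  qed
qed

lemma det_2_eq_0_if_eigenvector: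
  fixes a b c d \<mu> z1 z2 :: "'a :: idom"
  assumes "a * z1 + b * z2 = \<mu> * z1" "c * z1 + d * z2 = \<mu> * z2" "(z1, z2) \<noteq> (0, 0)"
  shows "(a - \<mu>) * (d - \<mu>) - b * c = 0"
proof -
  have "((a - \<mu>) * (d - \<mu>) - b * c) * z1
      = (d - \<mu>) * (a * z1 + b * z2 - \<mu> * z1) - b * (c * z1 + d * z2 - \<mu> * z2)"
   "((a - \<mu>) * (d - \<mu>) - b * c) * z2
      = (a - \<mu>) * (c * z1 + d * z2 - \<mu> * z2) - c * (a * z1 + b * z2 - \<mu> * z1)"
    by (simp_all add: algebra_simps)
  then show ?thesis
    using assms by auto
qed

text \<open>An eigenvector \<open>v\<close> of the realification yields the eigenvectors
  \<open>(v0 + i v1, v2 + i v3)\<close> of \<open>A\<close> and \<open>(v0 - i v1, v2 - i v3)\<close> of \<open>conj A\<close>, not both zero.\<close>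

lemma eigenvalue_rmat4_complex_linear:
  assumes "eigenvalue (rmat4 (\<lambda>h. (a * fst h + b * snd h, c * fst h + d * snd h))) \<mu>"
  shows "(a - \<mu>) * (d - \<mu>) - b * c = 0 \<or> (cnj a - \<mu>) * (cnj d - \<mu>) - cnj b * cnj c = 0"
proof -
  let ?M = "rmat4 (\<lambda>h. (a * fst h + b * snd h, c * fst h + d * snd h))"
  obtain v where v: "v \<in> carrier_vec 4" "v \<noteq> 0\<^sub>v 4" "?M *\<^sub>v v = \<mu> \<cdot>\<^sub>v v"
    using assms unfolding eigenvalue_def eigenvector_def rmat4_def by auto
  have row: "(\<Sum>j\<in>{0, 1, 2, 3}. ?M $$ (i, j) * v $ j) = \<mu> * v $ i" if "i < 4" for i
  proof -
    have "{0, 1, 2, 3} = {0..<4::nat}"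
      by auto
    moreover have "(?M *\<^sub>v v) $ i = (\<mu> \<cdot>\<^sub>v v) $ i"
      using v by simp
    ultimately show ?thesis
      using that v(1) by (simp add: rmat4_def mult_mat_vec_def scalar_prod_def)
  qed
  have rows:
    "Re a * v $ 0 - Im a * v $ 1 + Re b * v $ 2 - Im b * v $ 3 = \<mu> * v $ 0"
    "Im a * v $ 0 + Re a * v $ 1 + Im b * v $ 2 + Re b * v $ 3 = \<mu> * v $ 1"
    "Re c * v $ 0 - Im c * v $ 1 + Re d * v $ 2 - Im d * v $ 3 = \<mu> * v $ 2"
    "Im c * v $ 0 + Re c * v $ 1 + Im d * v $ 2 + Re d * v $ 3 = \<mu> * v $ 3"
    using row[of 0] row[of 1] row[of 2] row[of 3]
    by (simp_all add: rmat4_def rbasis_def rcoord_def algebra_simps)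
  have realify:
    "x * (p + \<i> * q) + y * (r + \<i> * s)
       = (Re x * p - Im x * q + Re y * r - Im y * s) + \<i> * (Im x * p + Re x * q + Im y * r + Re y * s)"
    "cnj x * (p - \<i> * q) + cnj y * (r - \<i> * s)
       = (Re x * p - Im x * q + Re y * r - Im y * s) - \<i> * (Im x * p + Re x * q + Im y * r + Re y * s)"
    for x y p q r s :: complex
    by (subst (1 2) complex_eq[of x], subst (1 2) complex_eq[of y], simp add: algebra_simps)+
  define z1 z2 y1 y2 where "z1 = v $ 0 + \<i> * v $ 1" and "z2 = v $ 2 + \<i> * v $ 3"
    and "y1 = v $ 0 - \<i> * v $ 1" and "y2 = v $ 2 - \<i> * v $ 3"
  have "a * z1 + b * z2 = \<mu> * z1" "c * z1 + d * z2 = \<mu> * z2"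
    "cnj a * y1 + cnj b * y2 = \<mu> * y1" "cnj c * y1 + cnj d * y2 = \<mu> * y2"
    unfolding z1_def z2_def y1_def y2_def realify rows by (simp_all add: algebra_simps)
  moreover have "(z1, z2) \<noteq> (0, 0) \<or> (y1, y2) \<noteq> (0, 0)"
  proof (rule ccontr)
    assume "\<not> ?thesis"
    then have "v $ i = 0" if "i < 4" for i
      using that by (auto simp: z1_def z2_def y1_def y2_def less_Suc_eq numeral_eq_Suc)
    then have "v = 0\<^sub>v 4"
      using v(1) by (intro eq_vecI) auto
    then show False
      using v(2) by simp
  qed
  ultimately show ?thesis
    using det_2_eq_0_if_eigenvector by blast
qed

lemma Re_gt_0_if_quadratic_root:
  fixes \<mu> :: complex and T D :: real
  assumes "\<mu>^2 - T * \<mu> + D = 0" "T > 0" "D > 0"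
  shows "Re \<mu> > 0"
proof -
  have re: "(Re \<mu>)^2 - (Im \<mu>)^2 - T * Re \<mu> + D = 0" and im: "2 * Re \<mu> * Im \<mu> - T * Im \<mu> = 0"
    using arg_cong[OF assms(1), of Re] arg_cong[OF assms(1), of Im]
    by (simp_all add: power2_eq_square)
  show ?thesis
  proof (cases "Im \<mu> = 0")
    case True
    show ?thesis
    proof (rule ccontr)
      assume "\<not> Re \<mu> > 0"
      then have "T * Re \<mu> \<le> 0"
        using assms(2) by (simp add: mult_nonneg_nonpos)
      moreover have "(Re \<mu>)^2 - T * Re \<mu> + D = 0"
        using re True by simp
      ultimately show False
        using zero_le_power2[of "Re \<mu>"] assms(3) by linarith
    qed
  next
    case False
    then have "2 * Re \<mu> = T"
      using im by (simp add: left_diff_distrib[symmetric])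
    then show ?thesis
      using assms(2) by simp
  qed
qed

lemma Re_eigenvalue_rmat4_gt_0:
  fixes T D :: real
  assumes "eigenvalue (rmat4 (\<lambda>h. (a * fst h + b * snd h, c * fst h + d * snd h))) \<mu>"
    and "a + d = T" and "a * d - b * c = D" and "T > 0" and "D > 0"
  shows "Re \<mu> > 0"
proof -
  have "\<mu>^2 - T * \<mu> + D = 0"
    using eigenvalue_rmat4_complex_linear[OF assms(1)]
  proof
    assume "(a - \<mu>) * (d - \<mu>) - b * c = 0"
    moreover have "\<mu>^2 - (a + d) * \<mu> + (a * d - b * c) = (a - \<mu>) * (d - \<mu>) - b * c"
      by (simp add: algebra_simps power2_eq_square)
    ultimately show ?thesis
      using assms(2,3) by simp
  next
    assume "(cnj a - \<mu>) * (cnj d - \<mu>) - cnj b * cnj c = 0"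
    moreover have "\<mu>^2 - cnj (a + d) * \<mu> + cnj (a * d - b * c) = (cnj a - \<mu>) * (cnj d - \<mu>) - cnj b * cnj c"
      by (simp add: algebra_simps power2_eq_square)
    ultimately show ?thesis
      using assms(2,3) by simp
  qed
  then show ?thesis
    using Re_gt_0_if_quadratic_root assms(4,5) by blast
qed

lemma has_derivative_mult_vanishing:
  fixes f r :: "'a::real_normed_vector \<Rightarrow> 'b::real_normed_field"
  assumes "(f has_derivative f') (at q)" and "f q = 0" and "isCont r q"
  shows "((\<lambda>x. r x * f x) has_derivative (\<lambda>h. r q * f' h)) (at q)"
proof -
  have "bounded_linear f'"
    and lim: "((\<lambda>y. (f y - f q - f' (y - q)) /\<^sub>R norm (y - q)) \<longlongrightarrow> 0) (at q)"
    using assms(1) unfolding has_derivative_at_within by auto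
  then obtain K where K: "\<And>h. norm (f' h) \<le> norm h * K" "K > 0"
    using bounded_linear.pos_bounded by blast
  have r: "(r \<longlongrightarrow> r q) (at q)"
    using assms(3) by (simp add: continuous_at)
  have "((\<lambda>y. (r y - r q) * (f' (y - q) /\<^sub>R norm (y - q))) \<longlongrightarrow> 0) (at q)"
  proof (rule Lim_null_comparison)
    have "norm (f' (y - q) /\<^sub>R norm (y - q)) \<le> K" for y
      using K(1)[of "y - q"] K(2) by (cases "y = q") (auto simp: field_simps)
    then have "norm ((r y - r q) * (f' (y - q) /\<^sub>R norm (y - q))) \<le> norm (r y - r q) * K" for y
      unfolding norm_mult by (rule mult_left_mono) simp
    then show "\<forall>\<^sub>F y in at q. norm ((r y - r q) * (f' (y - q) /\<^sub>R norm (y - q))) \<le> norm (r y - r q) * K"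
      by (intro always_eventually allI)
    have "((\<lambda>y. norm (r y - r q)) \<longlongrightarrow> 0) (at q)"
      using r by (intro tendsto_norm_zero) (simp add: LIM_zero)
    then show "((\<lambda>y. norm (r y - r q) * K) \<longlongrightarrow> 0) (at q)"
      by (rule tendsto_mult_left_zero)
  qed
  then have "((\<lambda>y. r y * ((f y - f q - f' (y - q)) /\<^sub>R norm (y - q))
      + (r y - r q) * (f' (y - q) /\<^sub>R norm (y - q))) \<longlongrightarrow> r q * 0 + 0) (at q)"
    by (intro tendsto_add tendsto_mult r lim)
  moreover have "r y * ((f y - f q - f' (y - q)) /\<^sub>R norm (y - q)) + (r y - r q) * (f' (y - q) /\<^sub>R norm (y - q))
      = (r y * f y - r q * f q - r q * f' (y - q)) /\<^sub>R norm (y - q)" for y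
    using assms(2) by (simp add: algebra_simps)
  moreover have "bounded_linear (\<lambda>h. r q * f' h)"
    using \<open>bounded_linear f'\<close> by (rule bounded_linear_compose[OF bounded_linear_mult_right])
  ultimately show ?thesis
    unfolding has_derivative_at_within by simp
qed

lemma coord_emb [simp]: "coord k (emb k q) = 1"
  by (cases q) simp

lemma others_emb [simp]: "others k (emb k q) = q"
  by (cases q) simp

lemma emb_nonzero: "emb k q \<noteq> 0"
  by (cases q) (simp add: zero_prod_def)

lemma isCont_emb: "isCont (emb k) q"
proof -
  have "emb k = (if k = 0 then (\<lambda>x. (1, fst x, snd x))
      else if k = 1 then (\<lambda>x. (fst x, 1, snd x)) else (\<lambda>x. (fst x, snd x, 1)))"
    by (simp add: fun_eq_iff)
  moreover have "isCont (\<lambda>x. (1, fst x, snd x)) q" "isCont (\<lambda>x. (fst x, 1, snd x)) q"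
    "isCont (\<lambda>x. (fst x, snd x, 1)) q"
    by (intro continuous_intros)+
  ultimately show ?thesis
    by simp
qed

lemma coord_cscale: "coord k (cscale s p) = s * coord k p"
  by (cases p) simp

lemma others_cscale: "others k (cscale s p) = (s * fst (others k p), s * snd (others k p))"
  by (cases p) simp

lemma emb_aff: "coord k p \<noteq> 0 \<Longrightarrow> emb k (aff k p) = cscale (1 / coord k p) p"
  by (cases p; cases "k = 0"; cases "k = 1") (simp_all add: aff_def)

lemma J2_nonzero: "p \<noteq> 0 \<Longrightarrow> J2 p \<noteq> 0"
  by (cases p) (auto simp: zero_prod_def)

lemma J2_cscale_eigenvector: "J2 p = cscale c p \<Longrightarrow> J2 (cscale s p) = cscale (s * c) (cscale s p)"
  by (cases p) (simp add: power2_eq_square)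

lemma chart_field_eq_0_if_eigenvector: "V (emb k q) = cscale w (emb k q) \<Longrightarrow> chart_field k V q = 0"
  by (simp add: chart_field_def coord_cscale others_cscale zero_prod_def)

lemma chart_field_rhoJ2:
  "chart_field k rhoJ2 x = (rho (emb k x) * fst (chart_field k J2 x), rho (emb k x) * snd (chart_field k J2 x))"
  by (simp add: chart_field_def rhoJ2_def Let_def coord_cscale others_cscale algebra_simps)

lemma sqnorm3_eq_norm: "sqnorm3 p = (norm p)^2"
  by (cases p) (simp add: norm_Pair)

lemma herm_self: "herm p p = sqnorm3 p"
  by (cases p) (simp add: complex_norm_square del: of_real_power)

lemma herm_cscale_right: "herm p (cscale w p') = cnj w * herm p p'"
  by (cases p; cases p') (simp add: algebra_simps)

lemma rho_eigenvector:
  assumes "J2 p = cscale w p" and "p \<noteq> 0"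
  shows "rho p = -2 * cnj w / sqnorm3 p"
proof -
  have "sqnorm3 p \<noteq> 0"
    using assms(2) by (simp add: sqnorm3_eq_norm)
  then show ?thesis
    by (simp add: rho_def assms(1) herm_cscale_right herm_self power2_eq_square)
qed

lemma isCont_rho:
  assumes "p \<noteq> 0"
  shows "isCont rho p"
proof -
  have "(\<lambda>p. herm p (J2 p)) = (\<lambda>p. fst p * cnj (fst (snd p) ^ 2) + fst (snd p) * cnj (snd (snd p) ^ 2)
      + snd (snd p) * cnj (fst p ^ 2))"
    by (simp add: fun_eq_iff)
  then have "isCont (\<lambda>p. herm p (J2 p)) p"
    by (simp only:) (intro continuous_intros)
  then have "isCont (\<lambda>p. -2 * herm p (J2 p) / of_real ((norm p ^ 2)^2)) p"
    using assms by (intro continuous_intros) auto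
  moreover have "rho = (\<lambda>p. -2 * herm p (J2 p) / of_real ((norm p ^ 2)^2))"
    by (intro ext) (simp only: rho_def sqnorm3_eq_norm)
  ultimately show ?thesis
    by (simp only:)
qed

lemma hyperbolic_sing_if_linear_part:
  assumes "(chart_field k J2 has_derivative (\<lambda>h. (a * fst h + b * snd h, c * fst h + d * snd h))) (at q)"
    and "a + d = -4 * w" and "a * d - b * c = 7 * w^2" and "w \<noteq> 0"
  shows "hyperbolic_sing k q"
  using roots_not_R_collinear[OF assms(4)]
  by (simp add: hyperbolic_sing_def char_poly_cjac[OF assms(1)] assms(2,3))

lemma has_derivative_chart_field_rhoJ2:
  assumes "chart_field k J2 q = 0" and "(chart_field k J2 has_derivative L) (at q)"
  shows "(chart_field k rhoJ2 has_derivative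
      (\<lambda>h. (rho (emb k q) * fst (L h), rho (emb k q) * snd (L h)))) (at q)"
proof -
  have "isCont (\<lambda>x. rho (emb k x)) q"
    by (intro isCont_o2[OF isCont_emb] isCont_rho emb_nonzero)
  with assms
  have "((\<lambda>x. rho (emb k x) * fst (chart_field k J2 x)) has_derivative
        (\<lambda>h. rho (emb k q) * fst (L h))) (at q)"
    "((\<lambda>x. rho (emb k x) * snd (chart_field k J2 x)) has_derivative
        (\<lambda>h. rho (emb k q) * snd (L h))) (at q)"
    by (auto intro!: has_derivative_mult_vanishing has_derivative_fst has_derivative_snd)
  from has_derivative_Pair[OF this] show ?thesis
    by (simp add: chart_field_rhoJ2[abs_def])
qed

lemma source_W_if_linear_part:
  assumes sing: "J2 (emb k q) = cscale w (emb k q)" and "w \<noteq> 0"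
    and D: "(chart_field k J2 has_derivative (\<lambda>h. (a * fst h + b * snd h, c * fst h + d * snd h))) (at q)"
    and "a + d = -4 * w" and "a * d - b * c = 7 * w^2"
  shows "source_W k q"
proof -
  define S where "S = sqnorm3 (emb k q)"
  define r where "r = rho (emb k q)"
  have S: "S > 0"
    using emb_nonzero by (simp add: S_def sqnorm3_eq_norm)
  have r: "r = -2 * cnj w / S"
    using rho_eigenvector[OF sing emb_nonzero] by (simp add: r_def S_def)
  from has_derivative_chart_field_rhoJ2[OF chart_field_eq_0_if_eigenvector[of J2, OF sing] D]
  have "(chart_field k rhoJ2 has_derivative
      (\<lambda>h. ((r * a) * fst h + (r * b) * snd h, (r * c) * fst h + (r * d) * snd h))) (at q)"
    by (simp add: r_def algebra_simps)
  moreover have "r * a + r * d = 8 * (cmod w)^2 / S"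
  proof -
    have "r * a + r * d = r * (a + d)"
      by (simp add: algebra_simps)
    also have "\<dots> = 8 * (w * cnj w) / S"
      using S by (simp add: r assms(4) field_simps)
    finally show ?thesis
      by (simp flip: complex_norm_square)
  qed
  moreover have "(r * a) * (r * d) - (r * b) * (r * c) = 28 * ((cmod w)^2)^2 / S^2"
  proof -
    have "(r * a) * (r * d) - (r * b) * (r * c) = r^2 * (a * d - b * c)"
      by (simp add: algebra_simps power2_eq_square)
    also have "\<dots> = 28 * (w * cnj w)^2 / S^2"
      using S by (simp add: r assms(5) field_simps power2_eq_square)
    finally show ?thesis
      by (simp flip: complex_norm_square)
  qed
  moreover have "8 * (cmod w)^2 / S > 0" "28 * ((cmod w)^2)^2 / S^2 > 0"
    using S assms(2) by simp_all
  ultimately show ?thesis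
    unfolding source_W_def using Re_eigenvalue_rmat4_gt_0 by blast
qed

lemma chart_field_J2_0_2:
  "k \<noteq> 1 \<Longrightarrow> chart_field k J2 = (\<lambda>x. ((snd x)^2 - (fst x)^3, 1 - (fst x)^2 * snd x))"
  by (simp add: fun_eq_iff chart_field_def power2_eq_square power3_eq_cube)

lemma chart_field_J2_1:
  "chart_field 1 J2 = (\<lambda>x. (1 - fst x * (snd x)^2, (fst x)^2 - (snd x)^3))"
  by (simp add: fun_eq_iff chart_field_def power2_eq_square power3_eq_cube)

text \<open>Charts 0 and 2 carry the same chart field and the same singular points: the cyclic
  permutation \<open>(x, y, z) \<mapsto> (z, x, y)\<close> commutes with \<open>J2\<close> and maps \<open>emb 2\<close> to \<open>emb 0\<close>.\<close>

lemma hyperbolic_sing_source_W_chart_0_2: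
  assumes "k \<noteq> 1" and sing: "J2 (emb k q) = cscale w (emb k q)"
  shows "hyperbolic_sing k q \<and> source_W k q"
proof -
  obtain u v where q: "q = (u, v)"
    by fastforce
  have eqs: "u^2 = w" "v^2 = w * u" "1 = w * v"
    using sing assms(1) by (auto simp: q split: if_splits)
  have "w \<noteq> 0"
    using eqs(3) by auto
  have D: "(chart_field k J2 has_derivative
      (\<lambda>h. ((-3 * u^2) * fst h + (2 * v) * snd h, (-2 * u * v) * fst h + (-(u^2)) * snd h))) (at q)"
    unfolding chart_field_J2_0_2[OF assms(1)] q
    by (auto intro!: derivative_eq_intros simp: fun_eq_iff algebra_simps power2_eq_square power3_eq_cube)
  have "-3 * u^2 + -(u^2) = -4 * w"
    using eqs by simp
  moreover have "(-3 * u^2) * (-(u^2)) - (2 * v) * (-2 * u * v) = 7 * w^2"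
  proof -
    have "u * v^2 = w^2"
      using eqs(1,2) by (simp add: power2_eq_square algebra_simps)
    moreover have "(-3 * u^2) * (-(u^2)) - (2 * v) * (-2 * u * v) = 3 * (u^2)^2 + 4 * (u * v^2)"
      by (simp add: algebra_simps power2_eq_square)
    ultimately show ?thesis
      using eqs(1) by simp
  qed
  ultimately show ?thesis
    using hyperbolic_sing_if_linear_part[OF D] source_W_if_linear_part[OF sing \<open>w \<noteq> 0\<close> D]
      \<open>w \<noteq> 0\<close> by blast
qed

lemma hyperbolic_sing_source_W_chart_1:
  assumes sing: "J2 (emb 1 q) = cscale w (emb 1 q)"
  shows "hyperbolic_sing 1 q \<and> source_W 1 q"
proof -
  obtain u v where q: "q = (u, v)"
    by fastforce
  have eqs: "1 = w * u" "v^2 = w" "u^2 = w * v"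
    using sing by (auto simp: q)
  have "w \<noteq> 0"
    using eqs(1) by auto
  have D: "(chart_field 1 J2 has_derivative
      (\<lambda>h. (-(v^2) * fst h + (-2 * u * v) * snd h, (2 * u) * fst h + (-3 * v^2) * snd h))) (at q)"
    unfolding chart_field_J2_1 q
    by (auto intro!: derivative_eq_intros simp: fun_eq_iff algebra_simps power2_eq_square power3_eq_cube)
  have "-(v^2) + -3 * v^2 = -4 * w"
    using eqs by simp
  moreover have "-(v^2) * (-3 * v^2) - (-2 * u * v) * (2 * u) = 7 * w^2"
  proof -
    have "u^2 * v = w^2"
      using eqs(2,3) by (simp add: power2_eq_square algebra_simps)
    moreover have "-(v^2) * (-3 * v^2) - (-2 * u * v) * (2 * u) = 3 * (v^2)^2 + 4 * (u^2 * v)"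
      by (simp add: algebra_simps power2_eq_square)
    ultimately show ?thesis
      using eqs(2) by simp
  qed
  ultimately show ?thesis
    using hyperbolic_sing_if_linear_part[OF D] source_W_if_linear_part[OF sing \<open>w \<noteq> 0\<close> D]
      \<open>w \<noteq> 0\<close> by blast
qed

theorem mainTheorem17:
  shows "(\<forall>p :: c3. p \<noteq> 0 \<longrightarrow> J2 p \<noteq> 0) \<and>
         (\<forall>p. sing_J2 p \<longrightarrow>
            (\<forall>k < 3. coord k p \<noteq> 0 \<longrightarrow>
               hyperbolic_sing k (aff k p) \<and> source_W k (aff k p)))"
proof (rule conjI; intro allI impI)
  fix p :: c3
  assume "p \<noteq> 0"
  then show "J2 p \<noteq> 0"
    by (rule J2_nonzero)
next
  fix p :: c3 and k :: nat
  assume "sing_J2 p" and "k < 3" and "coord k p \<noteq> 0"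
  then obtain c where "J2 p = cscale c p"
    unfolding sing_J2_def by blast
  then have "J2 (emb k (aff k p)) = cscale (1 / coord k p * c) (emb k (aff k p))"
    using emb_aff[OF \<open>coord k p \<noteq> 0\<close>] J2_cscale_eigenvector by simp
  then show "hyperbolic_sing k (aff k p) \<and> source_W k (aff k p)"
    using hyperbolic_sing_source_W_chart_0_2 hyperbolic_sing_source_W_chart_1 by (cases "k = 1") auto
qed

end
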